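(* Let $G$ be a group. Jensen's equation $f(xy)+f(xy^{-1})=2f(x)$ is stable over $G$ (i.e. stable for the pair $(G;E)$ for every real Banach space $E$, equivalently for some real Banach space $E$) if and only if $PJ(G)=J_0(G)$.
   Context: For a real Banach space $E$, the equation is stable for the pair $(G;E)$ if for every $f\colon G\to E$ such that for some $c>0$, $\|f(xy)+f(xy^{-1})-2f(x)\|\le c$ for all $x,y\in G$, there exists $j\colon G\to E$ with $j(xy)+j(xy^{-1})=2j(x)$ for all $x,y$ and $j-f$ bounded. $PJ(G)$ is the space of functions $f\colon G\to\mathbb{R}$ such that for some $c>0$, $|f(xy)+f(xy^{-1})-2f(x)|\le c$ for all $x,y$, and $f(x^n)=nf(x)$ for all $x\in G$, $n\in\mathbb{Z}$. $J_0(G)$ is the space of $f\colon G\to\mathbb{R}$ with $f(xy)+f(xy^{-1})=2f(x)$ for all $x,y$ and $f(1)=0$. *)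

theory Defs
  imports Complex_Main
begin

text \<open>Groups are written additively via the (not necessarily commutative)
  type class group_add: x y corresponds to x + y and x y^{-1} to x - y.\<close>

definition gpow :: "'g::group_add \<Rightarrow> int \<Rightarrow> 'g" where
  "gpow x n = (if 0 \<le> n then (((+) x) ^^ nat n) 0
               else - ((((+) x) ^^ nat (- n)) 0))"

definition jensen_stable :: "'g::group_add itself \<Rightarrow> 'e::banach itself \<Rightarrow> bool" where
  "jensen_stable _ _ \<longleftrightarrow>
     (\<forall>f :: 'g \<Rightarrow> 'e.
        (\<exists>c>0. \<forall>x y. norm (f (x + y) + f (x - y) - 2 *\<^sub>R f x) \<le> c) \<longrightarrow>
        (\<exists>j :: 'g \<Rightarrow> 'e. (\<forall>x y. j (x + y) + j (x - y) = 2 *\<^sub>R j x) \<and>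
                        (\<exists>B. \<forall>x. norm (j x - f x) \<le> B)))"

definition PJ :: "('g::group_add \<Rightarrow> real) set" where
  "PJ = {f. (\<exists>c>0. \<forall>x y. \<bar>f (x + y) + f (x - y) - 2 * f x\<bar> \<le> c) \<and>
            (\<forall>x n. f (gpow x n) = of_int n * f x)}"

definition J0 :: "('g::group_add \<Rightarrow> real) set" where
  "J0 = {f. (\<forall>x y. f (x + y) + f (x - y) = 2 * f x) \<and> f 0 = 0}"

end

theory Submission
  imports Defs
begin

(* If Jensen's equation is stable and f is in PJ, then f v (for a vector v \<noteq> 0) is an
   approximate solution, hence at bounded distance from a solution j. Both j - j 0 and f v
   are homogeneous on cyclic subgroups (the value at x^n is n times the value at x), and two
   such maps at bounded distance coincide, so f solves Jensen's equation.

   Conversely, along each cyclic subgroup an approximate solution f with f 1 = 0 is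
   approximately additive, so Hyers' limit 2^-k f (x^(n 2^k)) gives a map g that is
   homogeneous on cyclic subgroups and at bounded distance from f. Then \<phi> \<circ> g is in
   PJ = J0 for every bounded linear functional \<phi>, and since such functionals separate
   points (Hahn-Banach), g itself solves Jensen's equation. *)

section \<open>Integer powers and Jensen functions on cyclic subgroups\<close>

lemma funpow_plus_commute: "x + ((+) x ^^ k) 0 = ((+) x ^^ k) 0 + (x::'g::group_add)"
  by (induction k) (simp_all add: add.assoc[symmetric])

lemma gpow_0 [simp]: "gpow x 0 = 0"
  by (simp add: gpow_def)

lemma gpow_succ: "gpow (x::'g::group_add) (n + 1) = gpow x n + x"
proof (cases "n \<ge> 0")
  case True
  then have "nat (n + 1) = Suc (nat n)" by simp
  with True show ?thesis by (simp add: gpow_def funpow_plus_commute)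
next
  case False
  then obtain k where k: "n = - int (Suc k)" using negD[of n] by auto
  show ?thesis
  proof (cases "k = 0")
    case True
    with k show ?thesis by (simp add: gpow_def)
  next
    case False
    with k have "n + 1 = - int k" "\<not> 0 \<le> - int k" by auto
    moreover have "nat (int k + 1) = Suc k" by simp
    ultimately show ?thesis using k by (simp add: gpow_def minus_add add.assoc)
  qed
qed

lemma gpow_1 [simp]: "gpow (x::'g::group_add) 1 = x"
  using gpow_succ[of x 0] by simp

lemma gpow_pred: "gpow (x::'g::group_add) (n - 1) = gpow x n - x"
  using gpow_succ[of x "n - 1"] by (simp add: eq_diff_eq)

lemma gpow_add: "gpow (x::'g::group_add) (m + n) = gpow x m + gpow x n"
proof (induction n rule: int_induct[where k = 0])
  case base
  then show ?case by simp
next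
  case (step1 i)
  have "gpow x (m + (i + 1)) = gpow x (m + i) + x"
    by (simp only: add.assoc[symmetric] gpow_succ)
  then show ?case by (simp only: step1 gpow_succ add.assoc)
next
  case (step2 i)
  have "gpow x (m + (i - 1)) = gpow x (m + i) - x"
    by (simp only: add_diff_eq gpow_pred)
  then show ?case by (simp only: step2 gpow_pred add_diff_eq)
qed

lemma gpow_neg: "gpow (x::'g::group_add) (- n) = - gpow x n"
  using gpow_add[of x n "- n"] by (simp add: minus_unique)

lemma gpow_diff: "gpow (x::'g::group_add) (m - n) = gpow x m - gpow x n"
  using gpow_add[of x m "- n"] by (simp add: gpow_neg)

lemma gpow_mult: "gpow (gpow (x::'g::group_add) n) m = gpow x (n * m)"
proof (induction m rule: int_induct[where k = 0])
  case base
  then show ?case by simp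
next
  case (step1 i)
  then show ?case by (simp add: gpow_succ gpow_add distrib_left)
next
  case (step2 i)
  then show ?case by (simp add: gpow_pred gpow_diff right_diff_distrib)
qed

lemma additive_int_eq_scaleR:
  fixes A :: "int \<Rightarrow> 'e::real_vector"
  assumes add: "\<And>m n. A (m + n) = A m + A n"
  shows "A n = of_int n *\<^sub>R A 1"
proof (induction n rule: int_induct[where k = 0])
  case base
  show ?case using add[of 0 0] by simp
next
  case (step1 i)
  then show ?case using add[of i 1] by (simp add: algebra_simps)
next
  case (step2 i)
  then show ?case using add[of "i - 1" 1] by (simp add: algebra_simps)
qed

lemma int_jensen_approx_additive:
  fixes h :: "int \<Rightarrow> 'e::real_normed_vector"
  assumes jensen: "\<And>m n. norm (h (m + n) + h (m - n) - 2 *\<^sub>R h m) \<le> c" and "h 0 = 0"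
  shows "norm (h (m + n) - h m - h n) \<le> 3 / 2 * c"
proof -
  let ?J = "\<lambda>m n. h (m + n) + h (m - n) - 2 *\<^sub>R h m"
  have "2 *\<^sub>R (h (m + n) - h m - h n) = ?J m n + ?J n m - ?J 0 (m - n)"
    using \<open>h 0 = 0\<close> by (simp add: algebra_simps scaleR_2)
  then have "2 * norm (h (m + n) - h m - h n) = norm (?J m n + ?J n m - ?J 0 (m - n))"
    by (metis norm_scaleR abs_numeral)
  also have "\<dots> \<le> norm (?J m n + ?J n m) + norm (?J 0 (m - n))"
    by (rule norm_triangle_ineq4)
  also have "\<dots> \<le> norm (?J m n) + norm (?J n m) + norm (?J 0 (m - n))"
    using norm_triangle_ineq[of "?J m n" "?J n m"] by linarith
  also have "\<dots> \<le> 3 * c"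
    using jensen[of m n] jensen[of n m] jensen[of 0 "m - n"] by linarith
  finally show ?thesis by simp
qed

lemma jensen_gpow:
  fixes j :: "'g::group_add \<Rightarrow> 'e::real_normed_vector"
  assumes jensen: "\<And>x y. j (x + y) + j (x - y) = 2 *\<^sub>R j x" and "j 0 = 0"
  shows "j (gpow x n) = of_int n *\<^sub>R j x"
proof -
  let ?h = "\<lambda>n. j (gpow x n)"
  have "norm (?h (m + n) + ?h (m - n) - 2 *\<^sub>R ?h m) \<le> 0" for m n
    using jensen[of "gpow x m" "gpow x n"] by (simp add: gpow_add gpow_diff)
  then have "norm (?h (m + n) - ?h m - ?h n) \<le> 3 / 2 * 0" for m n
    by (rule int_jensen_approx_additive) (simp add: \<open>j 0 = 0\<close>)
  then have "?h (m + n) = ?h m + ?h n" for m n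
    by (simp only: mult_zero_right norm_le_zero_iff diff_diff_eq right_minus_eq)
  then show ?thesis by (subst additive_int_eq_scaleR) simp_all
qed

section \<open>Hyers' limit on the integers\<close>

lemma geometric_steps_convergent:
  fixes a :: "nat \<Rightarrow> 'e::banach"
  assumes steps: "\<And>k. norm (a (Suc k) - a k) \<le> K * (1/2) ^ Suc k"
  shows "a \<longlonglongrightarrow> lim a" and "norm (lim a - a 0) \<le> K"
proof -
  define b where "b k = a (Suc k) - a k" for k
  have geom: "(\<lambda>k. K * (1/2::real) ^ Suc k) sums K"
    using sums_mult[OF power_half_series, of K] by simp
  have summable_norm_b: "summable (\<lambda>k. norm (b k))"
    by (rule summable_comparison_test'[OF sums_summable[OF geom], of 0])
      (use steps in \<open>simp add: b_def\<close>)
  have "(\<lambda>n. sum b {..<n}) \<longlonglongrightarrow> suminf b"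
    by (rule summable_LIMSEQ[OF summable_norm_cancel[OF summable_norm_b]])
  moreover have "sum b {..<n} = a n - a 0" for n
    unfolding b_def by (rule sum_lessThan_telescope)
  ultimately have "(\<lambda>n. a 0 + (a n - a 0)) \<longlonglongrightarrow> a 0 + suminf b"
    by (intro tendsto_add tendsto_const) simp
  then have conv: "a \<longlonglongrightarrow> a 0 + suminf b" by simp
  then show "a \<longlonglongrightarrow> lim a" by (simp add: limI)
  have "norm (suminf b) \<le> (\<Sum>k. norm (b k))"
    by (rule summable_norm[OF summable_norm_b])
  also have "\<dots> \<le> (\<Sum>k. K * (1/2::real) ^ Suc k)"
    by (rule suminf_le[OF _ summable_norm_b sums_summable[OF geom]])
      (use steps in \<open>simp add: b_def\<close>)
  also have "\<dots> = K" using geom by (simp add: sums_iff)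
  finally show "norm (lim a - a 0) \<le> K" using limI[OF conv] by simp
qed

definition hyers_limit :: "(int \<Rightarrow> 'e::real_normed_vector) \<Rightarrow> int \<Rightarrow> 'e" where
  "hyers_limit h n = lim (\<lambda>k. h (n * 2 ^ k) /\<^sub>R 2 ^ k)"

lemma hyers_limit:
  fixes h :: "int \<Rightarrow> 'e::banach"
  assumes approx: "\<And>m n. norm (h (m + n) - h m - h n) \<le> K"
  shows "(\<lambda>k. h (n * 2 ^ k) /\<^sub>R 2 ^ k) \<longlonglongrightarrow> hyers_limit h n"
    and "norm (hyers_limit h n - h n) \<le> K"
proof -
  define a where "a k = h (n * 2 ^ k) /\<^sub>R 2 ^ k" for k
  have "norm (a (Suc k) - a k) \<le> K * (1/2) ^ Suc k" for k
  proof -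
    define m where "m = n * 2 ^ k"
    have "n * 2 ^ Suc k = m + m" by (simp add: m_def)
    then have "a (Suc k) = h (m + m) /\<^sub>R 2 ^ Suc k"
      by (simp only: a_def)
    moreover have "a k = (h m + h m) /\<^sub>R 2 ^ Suc k"
      by (simp add: a_def m_def scaleR_2[symmetric])
    ultimately have "a (Suc k) - a k = (h (m + m) - h m - h m) /\<^sub>R 2 ^ Suc k"
      by (simp only: scaleR_diff_right diff_diff_eq)
    then have "norm (a (Suc k) - a k) = norm (h (m + m) - h m - h m) / 2 ^ Suc k"
      by (simp add: divide_simps)
    also have "\<dots> \<le> K / 2 ^ Suc k"
      by (intro divide_right_mono approx) simp
    finally show ?thesis by (simp add: power_one_over)
  qed
  note conv = geometric_steps_convergent[of a, OF this]
  show "(\<lambda>k. h (n * 2 ^ k) /\<^sub>R 2 ^ k) \<longlonglongrightarrow> hyers_limit h n"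
    using conv(1) unfolding a_def hyers_limit_def .
  show "norm (hyers_limit h n - h n) \<le> K"
    using conv(2) unfolding a_def hyers_limit_def by simp
qed

lemma hyers_limit_add:
  fixes h :: "int \<Rightarrow> 'e::banach"
  assumes approx: "\<And>m n. norm (h (m + n) - h m - h n) \<le> K"
  shows "hyers_limit h (m + n) = hyers_limit h m + hyers_limit h n"
proof -
  define s where
    "s k = h ((m + n) * 2 ^ k) /\<^sub>R 2 ^ k - h (m * 2 ^ k) /\<^sub>R 2 ^ k
      - h (n * 2 ^ k) /\<^sub>R 2 ^ k" for k
  have "s \<longlonglongrightarrow> hyers_limit h (m + n) - hyers_limit h m - hyers_limit h n"
    unfolding s_def by (intro tendsto_diff hyers_limit(1)[where h = h, OF approx])
  moreover have "s \<longlonglongrightarrow> 0"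
  proof (rule tendsto_0_le[where f = "\<lambda>k. (1/2::real) ^ k" and K = K])
    show "(\<lambda>k. (1/2::real) ^ k) \<longlonglongrightarrow> 0" by (rule LIMSEQ_power_zero) simp
    have "norm (s k) \<le> norm ((1/2::real) ^ k) * K" for k
    proof -
      have "norm (s k) = norm (h (m * 2 ^ k + n * 2 ^ k) - h (m * 2 ^ k) - h (n * 2 ^ k)) / 2 ^ k"
        by (simp add: s_def distrib_right divide_simps scaleR_diff_right[symmetric])
      also have "\<dots> \<le> K / 2 ^ k" by (intro divide_right_mono approx) simp
      finally show ?thesis by (simp add: power_one_over)
    qed
    then show "\<forall>\<^sub>F k in sequentially. norm (s k) \<le> norm ((1/2::real) ^ k) * K"
      by simp
  qed
  ultimately have "hyers_limit h (m + n) - hyers_limit h m - hyers_limit h n = 0"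
    by (rule LIMSEQ_unique)
  then show ?thesis by (simp only: diff_diff_eq right_minus_eq)
qed

lemma hyers_limit_eq_scaleR:
  fixes h :: "int \<Rightarrow> 'e::banach"
  assumes "\<And>m n. norm (h (m + n) - h m - h n) \<le> K"
  shows "hyers_limit h n = of_int n *\<^sub>R hyers_limit h 1"
  using hyers_limit_add[where h = h, OF assms]
  by (rule additive_int_eq_scaleR[of "hyers_limit h" n])

section \<open>Sublinear functionals and the Hahn-Banach theorem\<close>

definition sublinear :: "('v::real_vector \<Rightarrow> real) \<Rightarrow> bool" where
  "sublinear q \<longleftrightarrow>
     (\<forall>x y. q (x + y) \<le> q x + q y) \<and> (\<forall>t x. 0 \<le> t \<longrightarrow> q (t *\<^sub>R x) = t * q x)"

lemma sublinear_add: "sublinear q \<Longrightarrow> q (x + y) \<le> q x + q y"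
  by (simp add: sublinear_def)

lemma sublinear_scaleR: "sublinear q \<Longrightarrow> 0 \<le> t \<Longrightarrow> q (t *\<^sub>R x) = t * q x"
  by (simp add: sublinear_def)

lemma sublinear_zero: "sublinear q \<Longrightarrow> q 0 = 0"
  using sublinear_scaleR[of q 0 0] by simp

lemma sublinear_minus_le: "sublinear q \<Longrightarrow> - q (- x) \<le> q x"
  using sublinear_add[of q x "- x"] sublinear_zero[of q] by simp

lemma sublinear_norm: "sublinear norm"
  by (simp add: sublinear_def norm_triangle_ineq)

lemma sublinearI:
  fixes u :: "'v::real_vector \<Rightarrow> real"
  assumes add: "\<And>x y. u (x + y) \<le> u x + u y"
    and scale: "\<And>r x. 0 < r \<Longrightarrow> u (r *\<^sub>R x) \<le> r * u x"
  shows "sublinear u"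
  unfolding sublinear_def
proof (intro conjI allI impI add)
  fix t :: real and x assume "0 \<le> t"
  then consider "t = 0" | "0 < t" by linarith
  then show "u (t *\<^sub>R x) = t * u x"
  proof cases
    case 1
    have "u 0 \<le> 2 * u 0" "u 0 \<le> 1/2 * u 0"
      using scale[of 2 0] scale[of "1/2" 0] by simp_all
    with 1 show ?thesis by simp
  next
    case 2
    have "u x = u (inverse t *\<^sub>R (t *\<^sub>R x))" using 2 by simp
    also have "\<dots> \<le> inverse t * u (t *\<^sub>R x)" using 2 by (intro scale) simp
    finally have "t * u x \<le> u (t *\<^sub>R x)" using 2 by (simp add: field_simps)
    with scale[OF 2, of x] show ?thesis by simp
  qed
qed

definition inf_along :: "('v::real_vector \<Rightarrow> real) \<Rightarrow> 'v \<Rightarrow> 'v \<Rightarrow> real" where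
  "inf_along q a x = Inf ((\<lambda>t. q (x + t *\<^sub>R a) - t * q a) ` {0..})"

lemma inf_along_le:
  assumes "sublinear q" "0 \<le> t"
  shows "inf_along q a x \<le> q (x + t *\<^sub>R a) - t * q a"
  unfolding inf_along_def
proof (rule cInf_lower)
  show "bdd_below ((\<lambda>t. q (x + t *\<^sub>R a) - t * q a) ` {0..})"
  proof (rule bdd_belowI2)
    fix s :: real assume "s \<in> {0..}"
    then have "q (s *\<^sub>R a) = s * q a" using assms(1) by (simp add: sublinear_scaleR)
    moreover have "q (s *\<^sub>R a) \<le> q (x + s *\<^sub>R a) + q (- x)"
      using sublinear_add[OF assms(1), of "x + s *\<^sub>R a" "- x"] by simp
    ultimately show "- q (- x) \<le> q (x + s *\<^sub>R a) - s * q a" by simp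
  qed
qed (use assms(2) in simp)

lemma inf_along_greatest:
  "(\<And>t. 0 \<le> t \<Longrightarrow> m \<le> q (x + t *\<^sub>R a) - t * q a) \<Longrightarrow> m \<le> inf_along q a x"
  unfolding inf_along_def by (rule cInf_greatest) auto

lemma inf_along_le_self: "sublinear q \<Longrightarrow> inf_along q a x \<le> q x"
  using inf_along_le[of q 0 a x] by simp

lemma sublinear_inf_along:
  assumes q: "sublinear q"
  shows "sublinear (inf_along q a)"
proof (rule sublinearI)
  fix x y
  have "inf_along q a (x + y) - (q (y + t *\<^sub>R a) - t * q a) \<le> inf_along q a x" if "0 \<le> t" for t
  proof (rule inf_along_greatest)
    fix s :: real assume "0 \<le> s"
    have "inf_along q a (x + y) \<le> q (x + y + (s + t) *\<^sub>R a) - (s + t) * q a"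
      using inf_along_le[OF q, of "s + t"] \<open>0 \<le> s\<close> \<open>0 \<le> t\<close> by simp
    also have "q (x + y + (s + t) *\<^sub>R a) \<le> q (x + s *\<^sub>R a) + q (y + t *\<^sub>R a)"
      using sublinear_add[OF q, of "x + s *\<^sub>R a" "y + t *\<^sub>R a"] by (simp add: algebra_simps)
    finally show "inf_along q a (x + y) - (q (y + t *\<^sub>R a) - t * q a)
        \<le> q (x + s *\<^sub>R a) - s * q a"
      by (simp add: algebra_simps)
  qed
  then have "inf_along q a (x + y) - inf_along q a x \<le> inf_along q a y"
    by (intro inf_along_greatest) (simp add: algebra_simps)
  then show "inf_along q a (x + y) \<le> inf_along q a x + inf_along q a y" by simp
next
  fix r :: real and x assume "0 < r"
  have "inf_along q a (r *\<^sub>R x) / r \<le> inf_along q a x"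
  proof (rule inf_along_greatest)
    fix s :: real assume "0 \<le> s"
    have "inf_along q a (r *\<^sub>R x) \<le> q (r *\<^sub>R x + (r * s) *\<^sub>R a) - (r * s) * q a"
      using inf_along_le[OF q, of "r * s"] \<open>0 < r\<close> \<open>0 \<le> s\<close> by simp
    also have "q (r *\<^sub>R x + (r * s) *\<^sub>R a) = r * q (x + s *\<^sub>R a)"
      using sublinear_scaleR[OF q, of r "x + s *\<^sub>R a"] \<open>0 < r\<close> by (simp add: scaleR_add_right)
    finally show "inf_along q a (r *\<^sub>R x) / r \<le> q (x + s *\<^sub>R a) - s * q a"
      using \<open>0 < r\<close> by (simp add: field_simps)
  qed
  then show "inf_along q a (r *\<^sub>R x) \<le> r * inf_along q a x"
    using \<open>0 < r\<close> by (simp add: field_simps)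
qed

lemma sublinear_chain_Inf:
  fixes C :: "('v::real_vector \<Rightarrow> real) set"
  assumes "C \<noteq> {}" and sub: "\<And>q. q \<in> C \<Longrightarrow> sublinear q \<and> q \<le> p"
    and chain: "\<And>q q'. q \<in> C \<Longrightarrow> q' \<in> C \<Longrightarrow> q \<le> q' \<or> q' \<le> q"
  shows "sublinear (\<lambda>x. INF q\<in>C. q x)" and "q \<in> C \<Longrightarrow> (\<lambda>x. INF q\<in>C. q x) \<le> q"
proof -
  let ?u = "\<lambda>x. INF q\<in>C. q x"
  have lower: "?u x \<le> q x" if "q \<in> C" for q x
  proof (rule cInf_lower)
    show "bdd_below ((\<lambda>q. q x) ` C)"
    proof (rule bdd_belowI2)
      fix q assume "q \<in> C"
      then have "- q (- x) \<le> q x" "q (- x) \<le> p (- x)"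
        using sub[of q] sublinear_minus_le by (auto simp: le_fun_def)
      then show "- p (- x) \<le> q x" by linarith
    qed
  qed (use that in simp)
  have greatest: "m \<le> ?u x" if "\<And>q. q \<in> C \<Longrightarrow> m \<le> q x" for m x
    using \<open>C \<noteq> {}\<close> that by (intro cInf_greatest) auto
  show "q \<in> C \<Longrightarrow> ?u \<le> q" by (simp add: le_fun_def lower)
  show "sublinear ?u"
  proof (rule sublinearI)
    fix x y
    have "?u (x + y) - q' y \<le> q x" if qC: "q \<in> C" "q' \<in> C" for q q'
    proof -
      obtain q'' where "q'' \<in> C" "q'' \<le> q" "q'' \<le> q'"
        using chain[OF qC] qC by (metis order_refl)
      then have "?u (x + y) \<le> q'' x + q'' y"
        using lower[of q'' "x + y"] sublinear_add[of q'' x y] sub by fastforce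
      moreover have "q'' x \<le> q x" "q'' y \<le> q' y"
        using \<open>q'' \<le> q\<close> \<open>q'' \<le> q'\<close> by (simp_all add: le_fun_def)
      ultimately show ?thesis by linarith
    qed
    then have "?u (x + y) - q' y \<le> ?u x" if "q' \<in> C" for q'
      using that by (intro greatest)
    then have "?u (x + y) - ?u x \<le> ?u y"
      by (intro greatest) (simp add: algebra_simps)
    then show "?u (x + y) \<le> ?u x + ?u y" by simp
  next
    fix r :: real and x assume "0 < r"
    have "?u (r *\<^sub>R x) / r \<le> ?u x"
    proof (rule greatest)
      fix q assume "q \<in> C"
      then have "?u (r *\<^sub>R x) \<le> r * q x"
        using lower[of q "r *\<^sub>R x"] sub sublinear_scaleR[of q r x] \<open>0 < r\<close> by simp
      then show "?u (r *\<^sub>R x) / r \<le> q x" using \<open>0 < r\<close> by (simp add: field_simps)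
    qed
    then show "?u (r *\<^sub>R x) \<le> r * ?u x" using \<open>0 < r\<close> by (simp add: field_simps)
  qed
qed

text \<open>Minimality forces \<open>inf_along m a = m\<close>, and \<open>inf_along m a x \<le> m (x + a) - m a\<close>
  is the missing half of additivity.\<close>

lemma sublinear_minimal_imp_linear:
  assumes m: "sublinear m" and minimal: "\<And>q. sublinear q \<Longrightarrow> q \<le> m \<Longrightarrow> q = m"
  shows "linear m"
proof -
  have add: "m (x + a) = m x + m a" for x a
  proof -
    have "inf_along m a = m"
      using minimal sublinear_inf_along[OF m] inf_along_le_self[OF m] by (simp add: le_fun_def)
    then have "m x \<le> m (x + 1 *\<^sub>R a) - 1 * m a"
      using inf_along_le[OF m, of 1 a x] by simp
    with sublinear_add[OF m, of x a] show ?thesis by simp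
  qed
  have minus: "m (- x) = - m x" for x
    using add[of x "- x"] sublinear_zero[OF m] by simp
  have "m (r *\<^sub>R x) = r * m x" for r x
  proof (cases "0 \<le> r")
    case True
    then show ?thesis by (rule sublinear_scaleR[OF m])
  next
    case False
    then have "m (r *\<^sub>R x) = - m ((- r) *\<^sub>R x)" using minus[of "(- r) *\<^sub>R x"] by simp
    also have "\<dots> = r * m x" using False sublinear_scaleR[OF m, of "- r" x] by simp
    finally show ?thesis .
  qed
  with add show "linear m" by (intro linearI) simp_all
qed

lemma exists_minimal_sublinear_below:
  fixes p :: "'v::real_vector \<Rightarrow> real"
  assumes "sublinear p"
  obtains m where "sublinear m" "m \<le> p" "\<And>q. sublinear q \<Longrightarrow> q \<le> m \<Longrightarrow> q = m"
proof -
  define S where "S = {q :: 'v \<Rightarrow> real. sublinear q \<and> q \<le> p}"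
  have po: "partial_order_on S (relation_of (\<ge>) S)"
    unfolding partial_order_on_def preorder_on_def refl_on_def trans_def antisym_def
      relation_of_def
    by auto
  have "\<exists>m\<in>S. \<forall>q\<in>S. m \<ge> q \<longrightarrow> q = m"
  proof (rule predicate_Zorn[OF po])
    fix C assume C: "C \<in> Chains (relation_of (\<ge>) S)"
    then have "C \<subseteq> S" by (rule Chains_relation_of)
    show "\<exists>u\<in>S. \<forall>q\<in>C. q \<ge> u"
    proof (cases "C = {}")
      case True
      then show ?thesis using assms by (auto simp: S_def)
    next
      case False
      have chain: "q \<le> q' \<or> q' \<le> q" if "q \<in> C" "q' \<in> C" for q q'
        using C that unfolding Chains_def relation_of_def by blast
      have sub: "sublinear q \<and> q \<le> p" if "q \<in> C" for q
        using \<open>C \<subseteq> S\<close> that by (auto simp: S_def)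
      note Inf_C = sublinear_chain_Inf[OF False sub chain]
      obtain q where "q \<in> C" using False by blast
      then have "(\<lambda>x. INF q\<in>C. q x) \<in> S"
        using Inf_C sub[of q] by (auto simp: S_def intro: order_trans)
      with Inf_C(2) show ?thesis by blast
    qed
  qed
  then obtain m where "m \<in> S" and "\<And>q. q \<in> S \<Longrightarrow> q \<le> m \<Longrightarrow> q = m" by blast
  moreover have "q \<in> S" if "sublinear q" "q \<le> m" for q
    using that \<open>m \<in> S\<close> by (auto simp: S_def intro: order_trans)
  ultimately show ?thesis using that by (auto simp: S_def)
qed

lemma linear_below_sublinear:
  assumes "sublinear p"
  obtains \<phi> where "linear \<phi>" "\<phi> \<le> p"
  by (metis assms exists_minimal_sublinear_below sublinear_minimal_imp_linear)

text \<open>The dominating functional \<open>inf_along norm w\<close> is at most \<open>- norm w\<close> at \<open>- w\<close>,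
  which forces \<open>\<phi> w = norm w\<close>.\<close>

lemma norming_functional:
  fixes w :: "'v::real_normed_vector"
  obtains \<phi> where "linear \<phi>" "\<And>z. \<bar>\<phi> z\<bar> \<le> norm z" "\<phi> w = norm w"
proof -
  obtain \<phi> where "linear \<phi>" and below: "\<phi> \<le> inf_along norm w"
    using linear_below_sublinear[OF sublinear_inf_along[OF sublinear_norm]] by blast
  have le_norm: "\<phi> z \<le> norm z" for z
    using below inf_along_le_self[OF sublinear_norm, of w z]
    by (auto simp: le_fun_def intro: order_trans)
  have "\<phi> (- w) \<le> norm (- w + 1 *\<^sub>R w) - 1 * norm w"
    using below inf_along_le[OF sublinear_norm, of 1 w "- w"]
    by (auto simp: le_fun_def intro: order_trans)
  then have "norm w \<le> \<phi> w" using linear_neg[OF \<open>linear \<phi>\<close>, of w] by simp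
  moreover have "\<bar>\<phi> z\<bar> \<le> norm z" for z
    using le_norm[of z] le_norm[of "- z"] linear_neg[OF \<open>linear \<phi>\<close>, of z] by simp
  ultimately show ?thesis using that \<open>linear \<phi>\<close> le_norm[of w] by force
qed

section \<open>Stability versus \<open>PJ = J0\<close>\<close>

lemma J0_subset_PJ: "(J0 :: ('g::group_add \<Rightarrow> real) set) \<subseteq> PJ"
proof
  fix f :: "'g \<Rightarrow> real" assume "f \<in> J0"
  then have jensen: "\<And>x y. f (x + y) + f (x - y) = 2 *\<^sub>R f x" and "f 0 = 0"
    by (auto simp: J0_def)
  then have "f (gpow x n) = of_int n * f x" for x n
    using jensen_gpow[of f] by simp
  moreover have "\<bar>f (x + y) + f (x - y) - 2 * f x\<bar> \<le> 1" for x y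
    using jensen[of x y] by simp
  ultimately show "f \<in> PJ" unfolding PJ_def by (blast intro: zero_less_one)
qed

lemma homogeneous_eq_if_bounded_dist:
  fixes h F :: "'g::group_add \<Rightarrow> 'e::real_normed_vector"
  assumes hom_h: "\<And>x n. h (gpow x n) = of_int n *\<^sub>R h x"
    and hom_F: "\<And>x n. F (gpow x n) = of_int n *\<^sub>R F x"
    and dist: "\<And>x. norm (h x - F x) \<le> B"
  shows "h = F"
proof
  fix x
  have bound: "real n * norm (h x - F x) \<le> B" for n :: nat
  proof -
    have "real n * norm (h x - F x) = norm (h (gpow x (int n)) - F (gpow x (int n)))"
      by (simp add: hom_h hom_F flip: scaleR_diff_right)
    with dist show ?thesis by simp
  qed
  show "h x = F x"
  proof (rule ccontr)
    assume "h x \<noteq> F x"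
    then have "0 < norm (h x - F x)" by simp
    moreover obtain n :: nat where "B / norm (h x - F x) < real n"
      using reals_Archimedean2 by blast
    ultimately have "B < real n * norm (h x - F x)" by (simp add: field_simps)
    with bound[of n] show False by simp
  qed
qed

lemma jensen_stable_imp_PJ_subset_J0:
  fixes v :: "'e::banach"
  assumes stable: "jensen_stable TYPE('g::group_add) TYPE('e)" and "v \<noteq> 0"
  shows "(PJ :: ('g \<Rightarrow> real) set) \<subseteq> J0"
proof
  fix f :: "'g \<Rightarrow> real" assume "f \<in> PJ"
  then obtain c where "c > 0" and c: "\<And>x y. \<bar>f (x + y) + f (x - y) - 2 * f x\<bar> \<le> c"
    and hom_f: "\<And>x n. f (gpow x n) = of_int n * f x"
    by (auto simp: PJ_def)
  define F where "F x = f x *\<^sub>R v" for x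
  have defect_F: "F (x + y) + F (x - y) - 2 *\<^sub>R F x = (f (x + y) + f (x - y) - 2 * f x) *\<^sub>R v"
    for x y
    by (simp add: F_def algebra_simps)
  have "norm (F (x + y) + F (x - y) - 2 *\<^sub>R F x) \<le> c * norm v" for x y
    unfolding defect_F using c[of x y] by (simp add: mult_right_mono)
  moreover have "c * norm v > 0" using \<open>c > 0\<close> \<open>v \<noteq> 0\<close> by simp
  ultimately obtain j B where jensen: "\<And>x y. j (x + y) + j (x - y) = 2 *\<^sub>R j x"
    and close: "\<And>x. norm (j x - F x) \<le> B"
    using stable unfolding jensen_stable_def by blast
  define h where "h x = j x - j 0" for x
  have jensen_h: "h (x + y) + h (x - y) = 2 *\<^sub>R h x" for x y
    using jensen[of x y] by (simp add: h_def algebra_simps scaleR_2)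
  have "h = F"
  proof (rule homogeneous_eq_if_bounded_dist)
    show "h (gpow x n) = of_int n *\<^sub>R h x" for x n
      using jensen_gpow[of h, OF jensen_h] by (simp add: h_def)
    show "F (gpow x n) = of_int n *\<^sub>R F x" for x n
      by (simp add: F_def hom_f)
    have "norm (j 0) \<le> B" using close[of 0] hom_f[of 0 0] by (simp add: F_def)
    then show "norm (h x - F x) \<le> 2 * B" for x
      using close[of x] norm_triangle_ineq4[of "j x - F x" "j 0"] by (simp add: h_def algebra_simps)
  qed
  then have "(f (x + y) + f (x - y) - 2 * f x) *\<^sub>R v = 0" for x y
    using jensen_h[of x y] by (simp flip: defect_F)
  with \<open>v \<noteq> 0\<close> hom_f[of 0 0] show "f \<in> J0" by (simp add: J0_def)
qed

lemma jensen_approx_homogeneous: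
  fixes f :: "'g::group_add \<Rightarrow> 'e::banach"
  assumes defect: "\<And>x y. norm (f (x + y) + f (x - y) - 2 *\<^sub>R f x) \<le> c" and "f 0 = 0"
  obtains g where "\<And>x n. g (gpow x n) = of_int n *\<^sub>R g x"
    and "\<And>x. norm (g x - f x) \<le> 3 / 2 * c"
proof -
  define orbit where "orbit x n = f (gpow x n)" for x n
  have approx: "norm (orbit x (m + n) - orbit x m - orbit x n) \<le> 3 / 2 * c" for x m n
  proof (rule int_jensen_approx_additive)
    show "norm (orbit x (m + n) + orbit x (m - n) - 2 *\<^sub>R orbit x m) \<le> c" for m n
      using defect[of "gpow x m" "gpow x n"] by (simp add: orbit_def gpow_add gpow_diff)
  qed (simp add: orbit_def \<open>f 0 = 0\<close>)
  define g where "g x = hyers_limit (orbit x) 1" for x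
  have "g (gpow x n) = of_int n *\<^sub>R g x" for x n
  proof -
    have "g (gpow x n) = hyers_limit (orbit x) n"
      by (simp add: g_def hyers_limit_def orbit_def gpow_mult)
    also have "\<dots> = of_int n *\<^sub>R g x"
      unfolding g_def by (rule hyers_limit_eq_scaleR[where h = "orbit x", OF approx])
    finally show ?thesis .
  qed
  moreover have "norm (g x - f x) \<le> 3 / 2 * c" for x
    using hyers_limit(2)[where h = "orbit x" and n = 1, OF approx] by (simp add: g_def orbit_def)
  ultimately show ?thesis by (rule that)
qed

lemma homogeneous_jensen_if_PJ_subset_J0:
  fixes g :: "'g::group_add \<Rightarrow> 'e::real_normed_vector"
  assumes sub: "(PJ :: ('g \<Rightarrow> real) set) \<subseteq> J0"
    and hom: "\<And>x n. g (gpow x n) = of_int n *\<^sub>R g x"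
    and defect: "\<And>x y. norm (g (x + y) + g (x - y) - 2 *\<^sub>R g x) \<le> C"
  shows "g (x + y) + g (x - y) = 2 *\<^sub>R g x"
proof -
  let ?D = "\<lambda>x y. g (x + y) + g (x - y) - 2 *\<^sub>R g x"
  obtain \<phi> where lin: "linear \<phi>" and bounded: "\<And>z. \<bar>\<phi> z\<bar> \<le> norm z"
    and norming: "\<phi> (?D x y) = norm (?D x y)"
    using norming_functional[of "?D x y"] by blast
  have defect_\<phi>: "\<phi> (g (a + b)) + \<phi> (g (a - b)) - 2 * \<phi> (g a) = \<phi> (?D a b)" for a b
    using lin by (simp add: linear_add linear_diff linear_scale)
  have "\<phi> \<circ> g \<in> PJ"
    unfolding PJ_def
  proof (intro CollectI conjI exI allI)
    show "C + 1 > 0" using norm_ge_zero[of "?D 0 0"] defect[of 0 0] by linarith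
    show "\<bar>(\<phi> \<circ> g) (a + b) + (\<phi> \<circ> g) (a - b) - 2 * (\<phi> \<circ> g) a\<bar> \<le> C + 1" for a b
      using defect_\<phi>[of a b] bounded[of "?D a b"] defect[of a b] by simp
    show "(\<phi> \<circ> g) (gpow a n) = of_int n * (\<phi> \<circ> g) a" for a n
      using lin by (simp add: hom linear_scale)
  qed
  with sub have "\<phi> (?D x y) = 0"
    using defect_\<phi>[of x y] by (auto simp: J0_def)
  with norming show ?thesis by simp
qed

lemma PJ_subset_J0_imp_jensen_stable:
  assumes sub: "(PJ :: ('g::group_add \<Rightarrow> real) set) \<subseteq> J0"
  shows "jensen_stable TYPE('g) TYPE('e::banach)"
  unfolding jensen_stable_def
proof (intro allI impI)
  fix F :: "'g \<Rightarrow> 'e"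
  assume "\<exists>c>0. \<forall>x y. norm (F (x + y) + F (x - y) - 2 *\<^sub>R F x) \<le> c"
  then obtain c where defect_F: "\<And>x y. norm (F (x + y) + F (x - y) - 2 *\<^sub>R F x) \<le> c"
    by blast
  define f where "f x = F x - F 0" for x
  have defect_f: "norm (f (x + y) + f (x - y) - 2 *\<^sub>R f x) \<le> c" for x y
    using defect_F[of x y] by (simp add: f_def algebra_simps scaleR_2)
  obtain g where hom: "\<And>x n. g (gpow x n) = of_int n *\<^sub>R g x"
    and close: "\<And>x. norm (g x - f x) \<le> 3 / 2 * c"
    using jensen_approx_homogeneous[OF defect_f] by (auto simp: f_def)
  have "norm (g (x + y) + g (x - y) - 2 *\<^sub>R g x) \<le> 7 * c" for x y
  proof -
    let ?e = "\<lambda>x. g x - f x"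
    have "g (x + y) + g (x - y) - 2 *\<^sub>R g x
        = (f (x + y) + f (x - y) - 2 *\<^sub>R f x) + (?e (x + y) + ?e (x - y)) - 2 *\<^sub>R ?e x"
      by (simp add: algebra_simps)
    also have "norm \<dots> \<le> 7 * c"
      using defect_f[of x y] close[of "x + y"] close[of "x - y"] close[of x]
        norm_triangle_ineq[of "f (x + y) + f (x - y) - 2 *\<^sub>R f x" "?e (x + y) + ?e (x - y)"]
        norm_triangle_ineq[of "?e (x + y)" "?e (x - y)"]
      by (intro norm_triangle_le_diff) simp
    finally show ?thesis .
  qed
  then have jensen_g: "g (x + y) + g (x - y) = 2 *\<^sub>R g x" for x y
    by (rule homogeneous_jensen_if_PJ_subset_J0[where g = g, OF sub hom])
  show "\<exists>j. (\<forall>x y. j (x + y) + j (x - y) = 2 *\<^sub>R j x) \<and> (\<exists>B. \<forall>x. norm (j x - F x) \<le> B)"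
  proof (intro exI conjI allI)
    show "(g (x + y) + F 0) + (g (x - y) + F 0) = 2 *\<^sub>R (g x + F 0)" for x y
      using jensen_g[of x y] by (simp add: algebra_simps scaleR_2)
    show "norm ((g x + F 0) - F x) \<le> 3 / 2 * c" for x
      using close[of x] by (simp add: f_def algebra_simps)
  qed
qed

theorem corollary3p3:
  assumes "\<exists>v :: 'e::banach. v \<noteq> 0"
  shows "jensen_stable TYPE('g::group_add) TYPE('e) \<longleftrightarrow> (PJ :: ('g \<Rightarrow> real) set) = J0"
proof
  assume "jensen_stable TYPE('g) TYPE('e)"
  with assms have "(PJ :: ('g \<Rightarrow> real) set) \<subseteq> J0"
    using jensen_stable_imp_PJ_subset_J0 by blast
  then show "(PJ :: ('g \<Rightarrow> real) set) = J0" using J0_subset_PJ by (rule equalityI)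
next
  assume "(PJ :: ('g \<Rightarrow> real) set) = J0"
  then show "jensen_stable TYPE('g) TYPE('e)"
    by (intro PJ_subset_J0_imp_jensen_stable) simp
qed

end
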